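(* Let $G=\langle\Sigma_\tau,Q,\rightarrow,Q^0\rangle$ be a nondeterministic automaton with secret states $Q^S\subseteq Q$, and assume $UR(Q^0)\not\subseteq Q^S$. Let $\sim_o$ be an opaque observation equivalence on $G$ and $\tilde G$ the quotient of $G$ modulo $\sim_o$ (with secret states $\{[x]\mid x\in Q^S\}$). Let $H_{ob}$ be the quotient of $det(\tilde G)$ modulo some opaque bisimulation $\approx_o$, and $H_b$ the quotient of $det(\tilde G)$ modulo some bisimulation equivalence $\approx$. Let $H_{obd}$ be the desired observer of $H_{ob}$, i.e., $H_{ob}$ with every class $[X]$ satisfying $X\subseteq\tilde Q^S$ deleted and only the reachable part kept. Let $T=TPO(det_d(G),det(G))$ and $T'=TPO(H_{obd},H_b)$ be the corresponding largest three-player observers. Then for every finite sequence $\omega$ of labels, $\omega$ labels a path starting at the initial state of $T$ if and only if $\omega$ labels a path starting at the initial state of $T'$.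
   Context: Automata: a (nondeterministic) automaton $G=\langle \Sigma_\tau,Q,\rightarrow,Q^0\rangle$ has finite observable alphabet $\Sigma$, special unobservable symbol $\tau\notin\Sigma$, $\Sigma_\tau=\Sigma\cup\{\tau\}$, transition relation $\rightarrow\subseteq Q\times\Sigma_\tau\times Q$ and initial states $Q^0$. Deterministic: one initial state, no $\tau$-transitions, functional transitions. $p\overset{s}{\Rightarrow}q$ ($s\in\Sigma^*$) means a path from $p$ to $q$ whose labels, with $\tau$'s deleted, spell $s$. $UR(B)=\{q\mid b\overset{\varepsilon}{\Rightarrow}q,\ b\in B\}$. The observer $det(G)$ is the deterministic automaton over $\Sigma$ with initial state $UR(Q^0)$ and $X\xrightarrow{\sigma}Y$ iff $Y=UR(\{y\mid x\xrightarrow{\sigma}y,\ x\in X\})\neq\emptyset$, restricted to reachable states. Given secret states $Q^S$, the desired observer $det_d(G)$ is $det(G)$ with all states $X\subseteq Q^S$ deleted and only the part reachable from the initial state kept. Quotient modulo an equivalence $\sim$: states are classes $[x]$, $[x]\xrightarrow{\sigma}[y]$ iff $x'\xrightarrow{\sigma}y'$ for some $x'\in[x],y'\in[y]$, initial states are classes of initial states. A bisimulation on an automaton is an equivalence $\approx$ such that $x_1\approx x_2$ and $x_1\xrightarrow{\sigma}y_1$ imply $x_2\xrightarrow{\sigma}y_2$ for some $y_2\approx y_1$. An opaque observation equivalence on $G$ is an equivalence $\sim_o$ on $Q$ such that $x_1\sim_o x_2$ implies (i) whenever $x_1\overset{s}{\Rightarrow}y_1$ ($s\in\Sigma^*$)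 there is $y_2\sim_o y_1$ with $x_2\overset{s}{\Rightarrow}y_2$, and (ii) $x_1\in Q^S\iff x_2\in Q^S$. An opaque bisimulation on $det(G)$ is an equivalence $\approx_o$ on its states such that $X_1\approx_o X_2$ implies (i) whenever $X_1\xrightarrow{s}Y_1$ there is $Y_2\approx_o Y_1$ with $X_2\xrightarrow{s}Y_2$, and (ii) $X_1\subseteq Q^S\iff X_2\subseteq Q^S$. Largest three-player observer: let $D=\langle\Sigma,X_D,\rightarrow_D,d_0\rangle$ and $F=\langle\Sigma,X_F,\rightarrow_F,f_0\rangle$ be deterministic automata. Let $\epsilon$ be a fresh symbol and $\Sigma^r=\{\sigma\to\epsilon\mid\sigma\in\Sigma\}$ a set of fresh "erasure" symbols. $TPO(D,F)$ is the labeled transition system whose states are of three types: $Y$-states $(d,f)\in X_D\times X_F$; $Z$-states $Z((d,f),e)$ with $e\in\Sigma$; $W$-states $W((d,f),a)$ with $a\in\Sigma\cup\Sigma^r$. Its initial state is the $Y$-state $(d_0,f_0)$, its states are those reachable from it, and its transitions are exactly: (1) $(d,f)\xrightarrow{e}Z((d,f),e)$ whenever $e$ is defined at $f$ in $F$; (2) $Z((d,f),e)\xrightarrow{\theta}Z((d',f),e)$ for $\theta\in\Sigma$ whenever $d\xrightarrow{\theta}_D d'$; (3) $Z((d,f),e)\xrightarrow{\epsilon}W((d,f),e)$ whenever $e$ is defined at $d$ in $D$ and at $f$ in $F$; (4) $Z((d,f),e)\xrightarrow{e\to\epsilon}W((d,f),e\to\epsilon)$ whenever $e$ is defined at $f$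 in $F$; (5) $W((d,f),e)\xrightarrow{e}(d',f')$ where $d\xrightarrow{e}_Dd'$ and $f\xrightarrow{e}_Ff'$; (6) $W((d,f),e\to\epsilon)\xrightarrow{e}(d,f')$ where $f\xrightarrow{e}_Ff'$. (The initial states of $D$ must exist, i.e., $D$ is nonempty.) *)

theory Defs
  imports Main
begin

text \<open>An automaton over observable alphabet of type 'a with states of type 'q.
  Transition labels are of type 'a option: None is the unobservable symbol tau,
  Some sigma is an observable symbol sigma.\<close>

record ('a, 'q) aut =
  aut_alph   :: "'a set"
  aut_states :: "'q set"
  aut_trans  :: "('q \<times> 'a option \<times> 'q) set"
  aut_init   :: "'q set"

definition automaton :: "('a, 'q) aut \<Rightarrow> bool" where
  "automaton G \<longleftrightarrow> finite (aut_alph G) \<and> finite (aut_states G)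
     \<and> aut_trans G \<subseteq> aut_states G \<times> (insert None (Some ` aut_alph G)) \<times> aut_states G
     \<and> aut_init G \<subseteq> aut_states G"

definition deterministic :: "('a, 'q) aut \<Rightarrow> bool" where
  "deterministic A \<longleftrightarrow> (\<exists>q0. aut_init A = {q0})
     \<and> (\<forall>p q. (p, None, q) \<notin> aut_trans A)
     \<and> (\<forall>p s q q'. (p, s, q) \<in> aut_trans A \<longrightarrow> (p, s, q') \<in> aut_trans A \<longrightarrow> q = q')"

inductive wtrans :: "('a, 'q) aut \<Rightarrow> 'q \<Rightarrow> 'a list \<Rightarrow> 'q \<Rightarrow> bool" for G where
  wt_refl: "wtrans G p [] p"
| wt_tau:  "(p, None, q) \<in> aut_trans G \<Longrightarrow> wtrans G q s r \<Longrightarrow> wtrans G p s r"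
| wt_vis:  "(p, Some \<sigma>, q) \<in> aut_trans G \<Longrightarrow> wtrans G q s r \<Longrightarrow> wtrans G p (\<sigma> # s) r"

inductive runs :: "('a, 'q) aut \<Rightarrow> 'q \<Rightarrow> 'a list \<Rightarrow> 'q \<Rightarrow> bool" for A where
  run_nil:  "runs A p [] p"
| run_cons: "(p, Some \<sigma>, q) \<in> aut_trans A \<Longrightarrow> runs A q s r \<Longrightarrow> runs A p (\<sigma> # s) r"

definition UR :: "('a, 'q) aut \<Rightarrow> 'q set \<Rightarrow> 'q set" where
  "UR G B = {q. \<exists>b\<in>B. (b, q) \<in> {(p, p'). (p, None, p') \<in> aut_trans G}\<^sup>*}"

definition det_init :: "('a, 'q) aut \<Rightarrow> 'q set" where
  "det_init G = UR G (aut_init G)"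

definition det_step :: "('a, 'q) aut \<Rightarrow> 'q set \<Rightarrow> 'a \<Rightarrow> 'q set" where
  "det_step G X \<sigma> = UR G {y. \<exists>x\<in>X. (x, Some \<sigma>, y) \<in> aut_trans G}"

inductive_set det_reach :: "('a, 'q) aut \<Rightarrow> 'q set set" for G where
  dr_init: "det_init G \<in> det_reach G"
| dr_step: "X \<in> det_reach G \<Longrightarrow> \<sigma> \<in> aut_alph G \<Longrightarrow> det_step G X \<sigma> \<noteq> {}
             \<Longrightarrow> det_step G X \<sigma> \<in> det_reach G"

definition det :: "('a, 'q) aut \<Rightarrow> ('a, 'q set) aut" where
  "det G = \<lparr> aut_alph = aut_alph G,
             aut_states = det_reach G,
             aut_trans = {(X, Some \<sigma>, det_step G X \<sigma>) | X \<sigma>.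
                            X \<in> det_reach G \<and> \<sigma> \<in> aut_alph G \<and> det_step G X \<sigma> \<noteq> {}},
             aut_init = {det_init G} \<rparr>"

inductive_set reach_within :: "('a, 'q) aut \<Rightarrow> 'q set \<Rightarrow> 'q set" for A K where
  rw_init: "x \<in> aut_init A \<Longrightarrow> x \<in> K \<Longrightarrow> x \<in> reach_within A K"
| rw_step: "x \<in> reach_within A K \<Longrightarrow> (x, l, y) \<in> aut_trans A \<Longrightarrow> y \<in> K
             \<Longrightarrow> y \<in> reach_within A K"

definition restrict_reach :: "('a, 'q) aut \<Rightarrow> 'q set \<Rightarrow> ('a, 'q) aut" where
  "restrict_reach A K = \<lparr> aut_alph = aut_alph A,
       aut_states = reach_within A K,
       aut_trans = {(x, l, y). (x, l, y) \<in> aut_trans A \<and> x \<in> reach_within A K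
                                 \<and> y \<in> reach_within A K},
       aut_init = aut_init A \<inter> reach_within A K \<rparr>"

definition det_d :: "('a, 'q) aut \<Rightarrow> 'q set \<Rightarrow> ('a, 'q set) aut" where
  "det_d G QS = restrict_reach (det G) {X. \<not> X \<subseteq> QS}"

definition quotient :: "('a, 'q) aut \<Rightarrow> ('q \<times> 'q) set \<Rightarrow> ('a, 'q set) aut" where
  "quotient A R = \<lparr> aut_alph = aut_alph A,
       aut_states = aut_states A // R,
       aut_trans = {(R `` {x}, l, R `` {y}) | x l y. (x, l, y) \<in> aut_trans A},
       aut_init = {R `` {x} | x. x \<in> aut_init A} \<rparr>"

definition bisimulation :: "('a, 'q) aut \<Rightarrow> ('q \<times> 'q) set \<Rightarrow> bool" where
  "bisimulation A R \<longleftrightarrow> equiv (aut_states A) R \<and>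
     (\<forall>x1 x2 \<sigma> y1. (x1, x2) \<in> R \<longrightarrow> (x1, \<sigma>, y1) \<in> aut_trans A \<longrightarrow>
        (\<exists>y2. (x2, \<sigma>, y2) \<in> aut_trans A \<and> (y2, y1) \<in> R))"

definition opaque_obs_equiv :: "('a, 'q) aut \<Rightarrow> 'q set \<Rightarrow> ('q \<times> 'q) set \<Rightarrow> bool" where
  "opaque_obs_equiv G QS R \<longleftrightarrow> equiv (aut_states G) R \<and>
     (\<forall>x1 x2. (x1, x2) \<in> R \<longrightarrow>
        (\<forall>s y1. wtrans G x1 s y1 \<longrightarrow> (\<exists>y2. (y2, y1) \<in> R \<and> wtrans G x2 s y2))
        \<and> (x1 \<in> QS \<longleftrightarrow> x2 \<in> QS))"

definition opaque_bisim :: "('a, 'q set) aut \<Rightarrow> 'q set \<Rightarrow> ('q set \<times> 'q set) set \<Rightarrow> bool" where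
  "opaque_bisim A QS R \<longleftrightarrow> equiv (aut_states A) R \<and>
     (\<forall>X1 X2. (X1, X2) \<in> R \<longrightarrow>
        (\<forall>s Y1. runs A X1 s Y1 \<longrightarrow> (\<exists>Y2. (Y2, Y1) \<in> R \<and> runs A X2 s Y2))
        \<and> (X1 \<subseteq> QS \<longleftrightarrow> X2 \<subseteq> QS))"

datatype 'a tlabel = TSym 'a | TEps | TErase 'a  \<comment> \<open>TErase e is the symbol e \<rightarrow> \<epsilon>\<close>

datatype ('d, 'f, 'a) tstate =
    TY 'd 'f
  | TZ 'd 'f 'a
  | TWs 'd 'f 'a         \<comment> \<open>W((d,f),e), e in Sigma\<close>
  | TWr 'd 'f 'a         \<comment> \<open>W((d,f),e \<rightarrow> \<epsilon>)\<close>

inductive tpo_step :: "('a, 'd) aut \<Rightarrow> ('a, 'f) aut \<Rightarrow>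
    ('d, 'f, 'a) tstate \<Rightarrow> 'a tlabel \<Rightarrow> ('d, 'f, 'a) tstate \<Rightarrow> bool" for D F where
  t1: "(\<exists>f'. (f, Some e, f') \<in> aut_trans F) \<Longrightarrow> tpo_step D F (TY d f) (TSym e) (TZ d f e)"
| t2: "(d, Some \<theta>, d') \<in> aut_trans D \<Longrightarrow> tpo_step D F (TZ d f e) (TSym \<theta>) (TZ d' f e)"
| t3: "(\<exists>d'. (d, Some e, d') \<in> aut_trans D) \<Longrightarrow> (\<exists>f'. (f, Some e, f') \<in> aut_trans F)
        \<Longrightarrow> tpo_step D F (TZ d f e) TEps (TWs d f e)"
| t4: "(\<exists>f'. (f, Some e, f') \<in> aut_trans F) \<Longrightarrow> tpo_step D F (TZ d f e) (TErase e) (TWr d f e)"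
| t5: "(d, Some e, d') \<in> aut_trans D \<Longrightarrow> (f, Some e, f') \<in> aut_trans F
        \<Longrightarrow> tpo_step D F (TWs d f e) (TSym e) (TY d' f')"
| t6: "(f, Some e, f') \<in> aut_trans F \<Longrightarrow> tpo_step D F (TWr d f e) (TSym e) (TY d f')"

inductive tpo_path :: "('a, 'd) aut \<Rightarrow> ('a, 'f) aut \<Rightarrow>
    ('d, 'f, 'a) tstate \<Rightarrow> 'a tlabel list \<Rightarrow> ('d, 'f, 'a) tstate \<Rightarrow> bool" for D F where
  tp_nil:  "tpo_path D F s [] s"
| tp_cons: "tpo_step D F s l s' \<Longrightarrow> tpo_path D F s' w s'' \<Longrightarrow> tpo_path D F s (l # w) s''"

definition tpo_paths :: "('a, 'd) aut \<Rightarrow> ('a, 'f) aut \<Rightarrow> 'a tlabel list set" where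
  "tpo_paths D F = {w. \<exists>d0\<in>aut_init D. \<exists>f0\<in>aut_init F. \<exists>s. tpo_path D F (TY d0 f0) w s}"

end

theory Submission
  imports Defs
begin

(*
  Two players that simulate each other on observable moves, starting from related initial
  states, yield three-player observers whose states can be related componentwise, so the two
  observers have the same label sequences; it therefore suffices to relate the players.
  The observers of G and of its quotient by an opaque observation equivalence are related by
  X \<mapsto> X // R, since the equivalence commutes with unobservable reach and with observable
  steps. An observer and its quotient by a bisimulation are related by the class map. Finally,
  an opaque bisimulation never merges a secret estimate with a non-secret one, so the composed
  relation respects the deletion of secret estimates and survives the restriction to the
  desired observers.
*)

section \<open>Simulations between automata\<close>

definition simulation :: "('d \<times> 'e) set \<Rightarrow> ('a, 'd) aut \<Rightarrow> ('a, 'e) aut \<Rightarrow> bool" where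
  "simulation S A B \<longleftrightarrow>
     (\<forall>x\<in>aut_init A. \<exists>y\<in>aut_init B. (x, y) \<in> S) \<and>
     (\<forall>x y \<sigma> x'. (x, y) \<in> S \<longrightarrow> (x, Some \<sigma>, x') \<in> aut_trans A \<longrightarrow>
        (\<exists>y'. (y, Some \<sigma>, y') \<in> aut_trans B \<and> (x', y') \<in> S))"

definition bisimilar :: "('d \<times> 'e) set \<Rightarrow> ('a, 'd) aut \<Rightarrow> ('a, 'e) aut \<Rightarrow> bool" where
  "bisimilar S A B \<longleftrightarrow> simulation S A B \<and> simulation (S\<inverse>) B A"

lemma simulation_init:
  "simulation S A B \<Longrightarrow> x \<in> aut_init A \<Longrightarrow> \<exists>y\<in>aut_init B. (x, y) \<in> S"
  unfolding simulation_def by blast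

lemma simulation_step:
  "simulation S A B \<Longrightarrow> (x, y) \<in> S \<Longrightarrow> (x, Some \<sigma>, x') \<in> aut_trans A
    \<Longrightarrow> \<exists>y'. (y, Some \<sigma>, y') \<in> aut_trans B \<and> (x', y') \<in> S"
  unfolding simulation_def by blast

lemma simulation_relcomp:
  "simulation S A B \<Longrightarrow> simulation T B C \<Longrightarrow> simulation (S O T) A C"
  unfolding simulation_def by (meson relcomp.simps)

lemma bisimilar_relcomp:
  "bisimilar S A B \<Longrightarrow> bisimilar T B C \<Longrightarrow> bisimilar (S O T) A C"
  unfolding bisimilar_def by (auto simp: converse_relcomp intro: simulation_relcomp)

lemma reach_within_subset: "x \<in> reach_within A K \<Longrightarrow> x \<in> K"
  by (induction rule: reach_within.induct) auto

lemma simulation_restrict_reach: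
  assumes sim: "simulation S A B" and agree: "\<forall>(x, y)\<in>S. x \<in> K \<longrightarrow> y \<in> L"
  shows "simulation (S \<inter> reach_within A K \<times> reach_within B L)
           (restrict_reach A K) (restrict_reach B L)"
  unfolding simulation_def
proof (intro conjI ballI allI impI)
  fix x assume "x \<in> aut_init (restrict_reach A K)"
  then have x: "x \<in> aut_init A" "x \<in> reach_within A K"
    by (simp_all add: restrict_reach_def)
  then obtain y where y: "y \<in> aut_init B" "(x, y) \<in> S"
    using simulation_init[OF sim] by blast
  with agree reach_within_subset[OF x(2)] have "y \<in> reach_within B L"
    by (blast intro: reach_within.rw_init)
  with x y show "\<exists>y\<in>aut_init (restrict_reach B L). (x, y) \<in> S \<inter> reach_within A K \<times> reach_within B L"
    by (auto simp: restrict_reach_def)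
next
  fix x y \<sigma> x'
  assume xy: "(x, y) \<in> S \<inter> reach_within A K \<times> reach_within B L"
    and "(x, Some \<sigma>, x') \<in> aut_trans (restrict_reach A K)"
  then have x': "(x, Some \<sigma>, x') \<in> aut_trans A" "x' \<in> reach_within A K"
    by (simp_all add: restrict_reach_def)
  then obtain y' where y': "(y, Some \<sigma>, y') \<in> aut_trans B" "(x', y') \<in> S"
    using simulation_step[OF sim] xy by blast
  with agree reach_within_subset[OF x'(2)] xy have "y' \<in> reach_within B L"
    by (blast intro: reach_within.rw_step)
  with xy x' y' show "\<exists>y'. (y, Some \<sigma>, y') \<in> aut_trans (restrict_reach B L)
      \<and> (x', y') \<in> S \<inter> reach_within A K \<times> reach_within B L"
    by (auto simp: restrict_reach_def)
qed

lemma bisimilar_restrict_reach: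
  assumes "bisimilar S A B" and "\<forall>(x, y)\<in>S. x \<in> K \<longleftrightarrow> y \<in> L"
  shows "bisimilar (S \<inter> reach_within A K \<times> reach_within B L)
           (restrict_reach A K) (restrict_reach B L)"
proof -
  have "simulation (S\<inverse> \<inter> reach_within B L \<times> reach_within A K)
          (restrict_reach B L) (restrict_reach A K)"
    using assms by (intro simulation_restrict_reach) (auto simp: bisimilar_def)
  moreover have "S\<inverse> \<inter> reach_within B L \<times> reach_within A K
      = (S \<inter> reach_within A K \<times> reach_within B L)\<inverse>"
    by auto
  ultimately show ?thesis
    using assms by (auto simp: bisimilar_def intro: simulation_restrict_reach)
qed

section \<open>Three-player observers of bisimilar players\<close>

abbreviation rel_tstate_via ::
    "('d \<times> 'd') set \<Rightarrow> ('f \<times> 'f') set \<Rightarrow> ('d, 'f, 'a) tstate \<Rightarrow> ('d', 'f', 'a) tstate \<Rightarrow> bool" where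
  "rel_tstate_via S T \<equiv> rel_tstate (\<lambda>d d'. (d, d') \<in> S) (\<lambda>f f'. (f, f') \<in> T) (=)"

lemma tpo_step_simulation:
  assumes "tpo_step D F s l t" "rel_tstate_via S T s s'"
    and simD: "simulation S D D'" and simF: "simulation T F F'"
  shows "\<exists>t'. tpo_step D' F' s' l t' \<and> rel_tstate_via S T t t'"
  using assms(1,2)
  by (cases rule: tpo_step.cases; cases s';
      force dest: simulation_step[OF simD] simulation_step[OF simF] intro: tpo_step.intros)

lemma tpo_path_simulation:
  assumes "tpo_path D F s w t" "rel_tstate_via S T s s'"
    and "simulation S D D'" "simulation T F F'"
  shows "\<exists>t'. tpo_path D' F' s' w t'"
  using assms(1,2)
proof (induction arbitrary: s' rule: tpo_path.induct)
  case (tp_nil s)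
  then show ?case by (blast intro: tpo_path.tp_nil)
next
  case (tp_cons s l s2 w s3)
  then obtain t' where "tpo_step D' F' s' l t'" "rel_tstate_via S T s2 t'"
    using tpo_step_simulation assms(3,4) by blast
  with tp_cons.IH show ?case by (blast intro: tpo_path.tp_cons)
qed

lemma tpo_paths_subset:
  assumes simD: "simulation S D D'" and simF: "simulation T F F'"
  shows "tpo_paths D F \<subseteq> tpo_paths D' F'"
proof
  fix w assume "w \<in> tpo_paths D F"
  then obtain d0 f0 t where d0: "d0 \<in> aut_init D" and f0: "f0 \<in> aut_init F"
    and "tpo_path D F (TY d0 f0) w t"
    unfolding tpo_paths_def by blast
  moreover obtain d0' f0' where "d0' \<in> aut_init D'" "f0' \<in> aut_init F'" "(d0, d0') \<in> S" "(f0, f0') \<in> T"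
    using simulation_init[OF simD d0] simulation_init[OF simF f0] by blast
  moreover have "rel_tstate_via S T (TY d0 f0) (TY d0' f0')"
    using \<open>(d0, d0') \<in> S\<close> \<open>(f0, f0') \<in> T\<close> by simp
  ultimately show "w \<in> tpo_paths D' F'"
    unfolding tpo_paths_def using tpo_path_simulation[OF _ _ simD simF] by blast
qed

lemma tpo_paths_eq:
  assumes "bisimilar S D D'" "bisimilar T F F'"
  shows "tpo_paths D F = tpo_paths D' F'"
  using tpo_paths_subset[of S D D' T F F'] tpo_paths_subset[of "S\<inverse>" D' D "T\<inverse>" F' F] assms
  by (auto simp: bisimilar_def)

abbreviation tau_steps :: "('a, 'q) aut \<Rightarrow> ('q \<times> 'q) set" where
  "tau_steps G \<equiv> {(p, p'). (p, None, p') \<in> aut_trans G}"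

lemma UR_iff: "q \<in> UR G B \<longleftrightarrow> (\<exists>b\<in>B. (b, q) \<in> (tau_steps G)\<^sup>*)"
  by (simp add: UR_def)

lemma UR_mono: "A \<subseteq> B \<Longrightarrow> UR G A \<subseteq> UR G B"
  unfolding UR_def by blast

lemma subset_UR: "B \<subseteq> UR G B"
  unfolding UR_def by blast

lemma UR_idem [simp]: "UR G (UR G B) = UR G B"
  unfolding UR_def by (blast intro: rtrancl_trans)

lemma UR_subset_states:
  assumes "automaton G" "B \<subseteq> aut_states G"
  shows "UR G B \<subseteq> aut_states G"
proof
  fix q assume "q \<in> UR G B"
  then obtain b where "b \<in> B" "(b, q) \<in> (tau_steps G)\<^sup>*"
    by (auto simp: UR_iff)
  from this(2) show "q \<in> aut_states G"
    using \<open>b \<in> B\<close> assms by (induction rule: rtrancl_induct) (auto simp: automaton_def)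
qed

lemma det_step_mono: "X \<subseteq> Y \<Longrightarrow> det_step G X \<sigma> \<subseteq> det_step G Y \<sigma>"
  unfolding det_step_def by (rule UR_mono) blast

lemma det_reach_subset_states_UR_closed:
  assumes "automaton G" "X \<in> det_reach G"
  shows "X \<subseteq> aut_states G \<and> UR G X = X"
  using assms(2)
proof induction
  case dr_init
  then show ?case
    using assms(1) UR_subset_states[OF assms(1)] by (simp add: det_init_def automaton_def)
next
  case (dr_step X \<sigma>)
  have "{y. \<exists>x\<in>X. (x, Some \<sigma>, y) \<in> aut_trans G} \<subseteq> aut_states G"
    using assms(1) by (auto simp: automaton_def)
  then show ?case
    using UR_subset_states[OF assms(1)] by (simp add: det_step_def)
qed

lemma det_trans_iff:
  "(X, l, Y) \<in> aut_trans (det G) \<longleftrightarrow>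
     (\<exists>\<sigma>. l = Some \<sigma> \<and> X \<in> det_reach G \<and> \<sigma> \<in> aut_alph G \<and> Y = det_step G X \<sigma> \<and> Y \<noteq> {})"
  by (auto simp: det_def)

lemma det_trans_target: "(X, l, Y) \<in> aut_trans (det G) \<Longrightarrow> Y \<in> det_reach G"
  by (auto simp: det_trans_iff intro: det_reach.dr_step)

lemma det_states: "aut_states (det G) = det_reach G"
  by (simp add: det_def)

lemma det_init_in_states: "aut_init (det G) \<subseteq> aut_states (det G)"
  by (simp add: det_def det_reach.dr_init)

lemma det_no_tau: "(X, None, Y) \<notin> aut_trans (det G)"
  by (simp add: det_trans_iff)

lemma wtrans_Nil_UR: "wtrans G p s r \<Longrightarrow> s = [] \<Longrightarrow> r \<in> UR G {p}"
  by (induction rule: wtrans.induct) (auto simp: UR_iff intro: converse_rtrancl_into_rtrancl)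

lemma wtrans_singleton_det_step:
  "wtrans G p s r \<Longrightarrow> s = [\<sigma>] \<Longrightarrow> r \<in> det_step G (UR G {p}) \<sigma>"
proof (induction rule: wtrans.induct)
  case (wt_refl p)
  then show ?case by simp
next
  case (wt_tau p q s r)
  have "UR G {q} \<subseteq> UR G {p}"
    using wt_tau.hyps(1) by (auto simp: UR_iff intro: converse_rtrancl_into_rtrancl)
  from det_step_mono[OF this] wt_tau.IH[OF wt_tau.prems] show ?case ..
next
  case (wt_vis p \<tau> q s r)
  then have "\<tau> = \<sigma>" "r \<in> UR G {q}"
    using wtrans_Nil_UR[OF wt_vis.hyps(2)] by simp_all
  moreover have "{q} \<subseteq> {y. \<exists>x\<in>UR G {p}. (x, Some \<sigma>, y) \<in> aut_trans G}"
    using wt_vis.hyps(1) subset_UR[of "{p}" G] \<open>\<tau> = \<sigma>\<close> by blast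
  ultimately show ?case
    unfolding det_step_def using UR_mono by blast
qed

lemma alph_quotient: "aut_alph (quotient A S) = aut_alph A"
  by (simp add: quotient_def)

lemma simulation_quotient:
  assumes init: "aut_init A \<subseteq> aut_states A"
    and closed: "\<And>x l y. (x, l, y) \<in> aut_trans A \<Longrightarrow> y \<in> aut_states A"
  shows "simulation ((\<lambda>x. (x, S `` {x})) ` aut_states A) A (quotient A S)"
  unfolding simulation_def
proof (intro conjI ballI allI impI)
  fix x assume "x \<in> aut_init A"
  then show "\<exists>C\<in>aut_init (quotient A S). (x, C) \<in> (\<lambda>x. (x, S `` {x})) ` aut_states A"
    using init by (auto simp: quotient_def)
next
  fix x C \<sigma> y
  assume "(x, C) \<in> (\<lambda>x. (x, S `` {x})) ` aut_states A" "(x, Some \<sigma>, y) \<in> aut_trans A"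
  moreover from this(2) have "(S `` {x}, Some \<sigma>, S `` {y}) \<in> aut_trans (quotient A S)"
    by (auto simp: quotient_def)
  ultimately show "\<exists>C'. (C, Some \<sigma>, C') \<in> aut_trans (quotient A S)
      \<and> (y, C') \<in> (\<lambda>x. (x, S `` {x})) ` aut_states A"
    using closed by blast
qed

lemma simulation_quotient_converse:
  assumes bis: "bisimulation A S" and init: "aut_init A \<subseteq> aut_states A"
    and closed: "\<And>x l y. (x, l, y) \<in> aut_trans A \<Longrightarrow> y \<in> aut_states A"
  shows "simulation (((\<lambda>x. (x, S `` {x})) ` aut_states A)\<inverse>) (quotient A S) A"
  unfolding simulation_def
proof (intro conjI ballI allI impI)
  fix C assume "C \<in> aut_init (quotient A S)"
  then show "\<exists>x\<in>aut_init A. (C, x) \<in> ((\<lambda>x. (x, S `` {x})) ` aut_states A)\<inverse>"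
    using init by (auto simp: quotient_def)
next
  fix C x \<sigma> C'
  assume "(C, x) \<in> ((\<lambda>x. (x, S `` {x})) ` aut_states A)\<inverse>"
    and "(C, Some \<sigma>, C') \<in> aut_trans (quotient A S)"
  then obtain x1 y1 where x: "x \<in> aut_states A" "S `` {x} = S `` {x1}"
    and y1: "C' = S `` {y1}" "(x1, Some \<sigma>, y1) \<in> aut_trans A"
    by (auto simp: quotient_def)
  have eqv: "equiv (aut_states A) S"
    using bis by (simp add: bisimulation_def)
  have "(x1, x) \<in> S"
    using equiv_class_self[OF eqv x(1)] x(2) by simp
  then obtain y where "(x, Some \<sigma>, y) \<in> aut_trans A" "(y, y1) \<in> S"
    using bis y1(2) unfolding bisimulation_def by blast
  moreover have "S `` {y} = C'"
    using equiv_class_eq[OF eqv \<open>(y, y1) \<in> S\<close>] y1(1) by simp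
  ultimately show "\<exists>y. (x, Some \<sigma>, y) \<in> aut_trans A
      \<and> (C', y) \<in> ((\<lambda>x. (x, S `` {x})) ` aut_states A)\<inverse>"
    using closed by blast
qed

lemma bisimilar_quotient:
  assumes "bisimulation A S" "aut_init A \<subseteq> aut_states A"
    and "\<And>x l y. (x, l, y) \<in> aut_trans A \<Longrightarrow> y \<in> aut_states A"
  shows "bisimilar ((\<lambda>x. (x, S `` {x})) ` aut_states A) A (quotient A S)"
  using simulation_quotient[OF assms(2,3)] simulation_quotient_converse[OF assms]
  by (simp add: bisimilar_def)

lemma bisimilar_det_quotient_bisim:
  assumes "bisimulation (det H) S"
  shows "bisimilar ((\<lambda>X. (X, S `` {X})) ` det_reach H) (det H) (quotient (det H) S)"
  using bisimilar_quotient[OF assms det_init_in_states det_trans_target[folded det_states]]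
  by (simp add: det_states)

lemma runs_singleton_iff: "runs A x [\<sigma>] y \<longleftrightarrow> (x, Some \<sigma>, y) \<in> aut_trans A"
  by (auto elim: runs.cases intro: runs.intros)

lemma opaque_bisim_imp_bisimulation:
  assumes "opaque_bisim A QS S" and no_tau: "\<And>x y. (x, None, y) \<notin> aut_trans A"
  shows "bisimulation A S"
  unfolding bisimulation_def
proof (intro conjI allI impI)
  show "equiv (aut_states A) S"
    using assms(1) by (simp add: opaque_bisim_def)
next
  fix x1 x2 l y1 assume "(x1, x2) \<in> S" "(x1, l, y1) \<in> aut_trans A"
  moreover obtain \<sigma> where "l = Some \<sigma>"
    using no_tau \<open>(x1, l, y1) \<in> aut_trans A\<close> by (cases l) auto
  ultimately show "\<exists>y2. (x2, l, y2) \<in> aut_trans A \<and> (y2, y1) \<in> S"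
    using assms(1) unfolding opaque_bisim_def by (metis runs_singleton_iff)
qed

lemma opaque_bisim_secret_iff:
  "opaque_bisim A QS S \<Longrightarrow> (x, z) \<in> S \<Longrightarrow> z \<subseteq> QS \<longleftrightarrow> x \<subseteq> QS"
  unfolding opaque_bisim_def by metis

lemma opaque_bisim_class_secret_iff:
  assumes "opaque_bisim A QS S" "x \<in> aut_states A"
  shows "(\<exists>z\<in>S `` {x}. z \<subseteq> QS) \<longleftrightarrow> x \<subseteq> QS"
proof -
  have "x \<in> S `` {x}"
    using assms(1) equiv_class_self[OF _ assms(2)] by (simp add: opaque_bisim_def)
  then show ?thesis
    using opaque_bisim_secret_iff[OF assms(1)] by blast
qed

section \<open>Quotients by opaque observation equivalences\<close>

lemma quotient_set_eq_image: "A // r = (\<lambda>x. r `` {x}) ` A"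
  by (auto simp: Equiv_Relations.quotient_def)

context
  fixes G :: "('a, 'q) aut" and QS :: "'q set" and R :: "('q \<times> 'q) set"
  assumes aut: "automaton G" and oe: "opaque_obs_equiv G QS R"
begin

lemma equiv_obs_equiv: "equiv (aut_states G) R"
  using oe by (simp add: opaque_obs_equiv_def)

lemma quotient_trans_lift:
  assumes "x \<in> aut_states G" "(R `` {x}, l, c) \<in> aut_trans (quotient G R)"
    and "\<And>x' y. (x', l, y) \<in> aut_trans G \<Longrightarrow> wtrans G x' s y"
  shows "\<exists>y. wtrans G x s y \<and> c = R `` {y}"
proof -
  obtain x' y where x': "R `` {x} = R `` {x'}" and y: "(x', l, y) \<in> aut_trans G" "c = R `` {y}"
    using assms(2) by (auto simp: quotient_def)
  have "(x', x) \<in> R"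
    using equiv_class_self[OF equiv_obs_equiv assms(1)] x' by simp
  then obtain y' where "(y', y) \<in> R" "wtrans G x s y'"
    using oe assms(3)[OF y(1)] unfolding opaque_obs_equiv_def by blast
  then show ?thesis
    using equiv_class_eq[OF equiv_obs_equiv] y(2) by metis
qed

lemma quotient_tau_step_lift:
  "x \<in> aut_states G \<Longrightarrow> (R `` {x}, None, c) \<in> aut_trans (quotient G R)
    \<Longrightarrow> \<exists>y\<in>UR G {x}. c = R `` {y}"
  using quotient_trans_lift[of x None c "[]"] wtrans_Nil_UR
  by (metis wtrans.wt_refl wtrans.wt_tau)

lemma quotient_step_lift:
  "x \<in> aut_states G \<Longrightarrow> (R `` {x}, Some \<sigma>, c) \<in> aut_trans (quotient G R)
    \<Longrightarrow> \<exists>y\<in>det_step G (UR G {x}) \<sigma>. c = R `` {y}"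
  using quotient_trans_lift[of x "Some \<sigma>" c "[\<sigma>]"] wtrans_singleton_det_step
  by (metis wtrans.wt_refl wtrans.wt_vis)

lemma UR_quotient:
  assumes "B \<subseteq> aut_states G"
  shows "UR (quotient G R) (B // R) = UR G B // R"
proof
  show "UR G B // R \<subseteq> UR (quotient G R) (B // R)"
  proof
    fix C assume "C \<in> UR G B // R"
    then obtain b q where "b \<in> B" "(b, q) \<in> (tau_steps G)\<^sup>*" "C = R `` {q}"
      by (auto simp: quotient_set_eq_image UR_iff)
    moreover from this(2) have "(R `` {b}, R `` {q}) \<in> (tau_steps (quotient G R))\<^sup>*"
      by (induction rule: rtrancl_induct) (auto simp: quotient_def intro: rtrancl_into_rtrancl)
    ultimately show "C \<in> UR (quotient G R) (B // R)"
      by (auto simp: UR_iff quotient_set_eq_image)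
  qed
next
  show "UR (quotient G R) (B // R) \<subseteq> UR G B // R"
  proof
    fix C assume "C \<in> UR (quotient G R) (B // R)"
    then obtain b where "b \<in> B" "(R `` {b}, C) \<in> (tau_steps (quotient G R))\<^sup>*"
      by (auto simp: UR_iff quotient_set_eq_image)
    from this(2) show "C \<in> UR G B // R"
    proof (induction rule: rtrancl_induct)
      case base
      show ?case by (rule quotientI[OF subsetD[OF subset_UR \<open>b \<in> B\<close>]])
    next
      case (step C C')
      then obtain q where q: "q \<in> UR G B" "C = R `` {q}"
        by (auto elim: quotientE)
      moreover have "q \<in> aut_states G"
        using q(1) UR_subset_states[OF aut assms] by blast
      ultimately obtain y where "y \<in> UR G {q}" "C' = R `` {y}"
        using quotient_tau_step_lift step.hyps(2) by auto
      moreover have "UR G {q} \<subseteq> UR G B"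
        using UR_mono[of "{q}" "UR G B" G] q(1) by simp
      ultimately show ?case by (blast intro: quotientI)
    qed
  qed
qed

lemma det_step_quotient:
  assumes "X \<subseteq> aut_states G" "UR G X = X"
  shows "det_step (quotient G R) (X // R) \<sigma> = det_step G X \<sigma> // R"
proof -
  let ?P = "{y. \<exists>x\<in>X. (x, Some \<sigma>, y) \<in> aut_trans G}"
  let ?PQ = "{C. \<exists>c\<in>X // R. (c, Some \<sigma>, C) \<in> aut_trans (quotient G R)}"
  have P_states: "?P \<subseteq> aut_states G"
    using aut by (auto simp: automaton_def)
  have "?P // R \<subseteq> ?PQ"
    by (auto simp: quotient_set_eq_image quotient_def)
  then have lower: "det_step G X \<sigma> // R \<subseteq> det_step (quotient G R) (X // R) \<sigma>"
    unfolding det_step_def UR_quotient[OF P_states, symmetric] by (rule UR_mono)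
  have "?PQ \<subseteq> det_step G X \<sigma> // R"
  proof
    fix C assume "C \<in> ?PQ"
    then obtain x where x: "x \<in> X" "(R `` {x}, Some \<sigma>, C) \<in> aut_trans (quotient G R)"
      by (auto elim: quotientE)
    then obtain y where "y \<in> det_step G (UR G {x}) \<sigma>" "C = R `` {y}"
      using quotient_step_lift assms(1) by blast
    moreover have "det_step G (UR G {x}) \<sigma> \<subseteq> det_step G X \<sigma>"
      using UR_mono[of "{x}" X G] x(1) assms(2) by (intro det_step_mono) simp
    ultimately show "C \<in> det_step G X \<sigma> // R"
      by (blast intro: quotientI)
  qed
  then have "det_step (quotient G R) (X // R) \<sigma> \<subseteq> UR (quotient G R) (det_step G X \<sigma> // R)"
    unfolding det_step_def[of "quotient G R"] by (rule UR_mono)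
  also have "\<dots> = det_step G X \<sigma> // R"
    unfolding det_step_def[of G] UR_quotient[OF UR_subset_states[OF aut P_states]] by simp
  finally show ?thesis using lower by (rule subset_antisym)
qed

lemma det_init_quotient: "det_init (quotient G R) = det_init G // R"
proof -
  have "aut_init (quotient G R) = aut_init G // R"
    by (auto simp: quotient_def quotient_set_eq_image)
  then show ?thesis
    using aut UR_quotient by (simp add: det_init_def automaton_def)
qed

lemma det_step_quotient_reach:
  assumes "X \<in> det_reach G"
  shows "det_step (quotient G R) (X // R) \<sigma> = det_step G X \<sigma> // R"
  using det_reach_subset_states_UR_closed[OF aut assms] by (intro det_step_quotient) simp_all

lemma det_reach_quotient: "X \<in> det_reach G \<Longrightarrow> X // R \<in> det_reach (quotient G R)"
proof (induction rule: det_reach.induct)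
  case dr_init
  show ?case
    using det_reach.dr_init[of "quotient G R"] by (simp add: det_init_quotient)
next
  case (dr_step X \<sigma>)
  have "\<sigma> \<in> aut_alph (quotient G R)"
    using dr_step.hyps(2) by (simp add: alph_quotient)
  with dr_step show ?case
    using det_reach.dr_step[OF dr_step.IH] by (simp add: det_step_quotient_reach)
qed

lemma simulation_det_quotient:
  "simulation ((\<lambda>X. (X, X // R)) ` det_reach G) (det G) (det (quotient G R))"
  unfolding simulation_def
proof (intro conjI ballI allI impI)
  fix X assume "X \<in> aut_init (det G)"
  then show "\<exists>C\<in>aut_init (det (quotient G R)). (X, C) \<in> (\<lambda>X. (X, X // R)) ` det_reach G"
    by (auto simp: det_def det_init_quotient intro: det_reach.dr_init)
next
  fix X C \<sigma> Y
  assume "(X, C) \<in> (\<lambda>X. (X, X // R)) ` det_reach G" "(X, Some \<sigma>, Y) \<in> aut_trans (det G)"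
  then have X: "X \<in> det_reach G" "C = X // R"
    and Y: "\<sigma> \<in> aut_alph G" "Y = det_step G X \<sigma>" "Y \<noteq> {}"
    by (auto simp: det_trans_iff)
  have "(C, Some \<sigma>, Y // R) \<in> aut_trans (det (quotient G R))"
    using X Y det_reach_quotient det_step_quotient_reach
    by (simp add: det_trans_iff alph_quotient)
  moreover have "Y \<in> det_reach G"
    using det_reach.dr_step[OF X(1) Y(1)] Y(2,3) by simp
  then have "(Y, Y // R) \<in> (\<lambda>X. (X, X // R)) ` det_reach G"
    by blast
  ultimately show "\<exists>C'. (C, Some \<sigma>, C') \<in> aut_trans (det (quotient G R))
      \<and> (Y, C') \<in> (\<lambda>X. (X, X // R)) ` det_reach G"
    by blast
qed

lemma simulation_det_quotient_converse:
  "simulation (((\<lambda>X. (X, X // R)) ` det_reach G)\<inverse>) (det (quotient G R)) (det G)"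
  unfolding simulation_def
proof (intro conjI ballI allI impI)
  fix C assume "C \<in> aut_init (det (quotient G R))"
  then show "\<exists>X\<in>aut_init (det G). (C, X) \<in> ((\<lambda>X. (X, X // R)) ` det_reach G)\<inverse>"
    by (auto simp: det_def det_init_quotient intro: det_reach.dr_init)
next
  fix C X \<sigma> C'
  assume "(C, X) \<in> ((\<lambda>X. (X, X // R)) ` det_reach G)\<inverse>"
    and "(C, Some \<sigma>, C') \<in> aut_trans (det (quotient G R))"
  then have X: "X \<in> det_reach G" "C = X // R"
    and C': "\<sigma> \<in> aut_alph G" "C' = det_step G X \<sigma> // R" "det_step G X \<sigma> \<noteq> {}"
    by (auto simp: det_trans_iff alph_quotient det_step_quotient_reach)
  then have "(X, Some \<sigma>, det_step G X \<sigma>) \<in> aut_trans (det G)"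
    by (simp add: det_trans_iff)
  moreover have "det_step G X \<sigma> \<in> det_reach G"
    using det_reach.dr_step[OF X(1) C'(1,3)] .
  then have "(C', det_step G X \<sigma>) \<in> ((\<lambda>X. (X, X // R)) ` det_reach G)\<inverse>"
    using C'(2) by blast
  ultimately show "\<exists>Y. (X, Some \<sigma>, Y) \<in> aut_trans (det G)
      \<and> (C', Y) \<in> ((\<lambda>X. (X, X // R)) ` det_reach G)\<inverse>"
    by blast
qed

lemma bisimilar_det_quotient:
  "bisimilar ((\<lambda>X. (X, X // R)) ` det_reach G) (det G) (det (quotient G R))"
  using simulation_det_quotient simulation_det_quotient_converse by (simp add: bisimilar_def)

lemma quotient_secret_iff: "X \<subseteq> aut_states G \<Longrightarrow> X // R \<subseteq> QS // R \<longleftrightarrow> X \<subseteq> QS"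
proof
  assume X: "X \<subseteq> aut_states G" and "X // R \<subseteq> QS // R"
  show "X \<subseteq> QS"
  proof
    fix x assume "x \<in> X"
    then have "R `` {x} \<in> QS // R"
      using \<open>X // R \<subseteq> QS // R\<close> by (blast intro: quotientI)
    then obtain q where "q \<in> QS" "R `` {x} = R `` {q}"
      by (auto elim: quotientE)
    moreover have "x \<in> R `` {x}"
      using equiv_class_self[OF equiv_obs_equiv] X \<open>x \<in> X\<close> by blast
    ultimately show "x \<in> QS"
      using oe by (auto simp: opaque_obs_equiv_def)
  qed
qed (auto simp: quotient_set_eq_image)

lemma ex_bisimilar_observers:
  assumes "bisimulation (det (quotient G R)) S"
  shows "\<exists>T. bisimilar T (det G) (quotient (det (quotient G R)) S)"
  using bisimilar_relcomp[OF bisimilar_det_quotient bisimilar_det_quotient_bisim[OF assms]] by blast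

lemma ex_bisimilar_desired_observers:
  assumes ob: "opaque_bisim (det (quotient G R)) (QS // R) S"
  shows "\<exists>T. bisimilar T (det_d G QS)
           (restrict_reach (quotient (det (quotient G R)) S) {C. \<not> (\<exists>Z\<in>C. Z \<subseteq> QS // R)})"
proof -
  let ?T = "(\<lambda>X. (X, X // R)) ` det_reach G O (\<lambda>Y. (Y, S `` {Y})) ` det_reach (quotient G R)"
  have "bisimulation (det (quotient G R)) S"
    using opaque_bisim_imp_bisimulation[OF ob det_no_tau] .
  then have bis: "bisimilar ?T (det G) (quotient (det (quotient G R)) S)"
    by (rule bisimilar_relcomp[OF bisimilar_det_quotient bisimilar_det_quotient_bisim])
  have "X \<in> {X. \<not> X \<subseteq> QS} \<longleftrightarrow> C \<in> {C. \<not> (\<exists>Z\<in>C. Z \<subseteq> QS // R)}"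
    if "(X, C) \<in> ?T" for X C
  proof -
    have X: "X \<in> det_reach G" "C = S `` {X // R}"
      using that by auto
    then have "(\<exists>Z\<in>C. Z \<subseteq> QS // R) \<longleftrightarrow> X // R \<subseteq> QS // R"
      using opaque_bisim_class_secret_iff[OF ob] det_reach_quotient by (simp add: det_states)
    also have "\<dots> \<longleftrightarrow> X \<subseteq> QS"
      using quotient_secret_iff det_reach_subset_states_UR_closed[OF aut X(1)] by blast
    finally show ?thesis by blast
  qed
  then have "\<forall>(X, C)\<in>?T. X \<in> {X. \<not> X \<subseteq> QS} \<longleftrightarrow> C \<in> {C. \<not> (\<exists>Z\<in>C. Z \<subseteq> QS // R)}"
    by blast
  from bisimilar_restrict_reach[OF bis this] show ?thesis
    unfolding det_d_def by blast
qed

end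

theorem theorem3:
  fixes G :: "('a, 'q) aut" and QS :: "'q set"
    and R :: "('q \<times> 'q) set"
    and Rob Rb :: "('q set set \<times> 'q set set) set"
  assumes "automaton G"
    and "QS \<subseteq> aut_states G"
    and "\<not> UR G (aut_init G) \<subseteq> QS"
    and "opaque_obs_equiv G QS R"
    and "opaque_bisim (det (quotient G R)) {R `` {x} | x. x \<in> QS} Rob"
    and "bisimulation (det (quotient G R)) Rb"
  shows "\<forall>\<omega>. \<omega> \<in> tpo_paths (det_d G QS) (det G) \<longleftrightarrow>
           \<omega> \<in> tpo_paths
                 (restrict_reach (quotient (det (quotient G R)) Rob)
                    {C. \<not> (\<exists>X\<in>C. X \<subseteq> {R `` {x} | x. x \<in> QS})})
                 (quotient (det (quotient G R)) Rb)"
proof -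
  have secret_classes: "{R `` {x} | x. x \<in> QS} = QS // R"
    by (auto simp: quotient_set_eq_image)
  obtain T where D: "bisimilar T (det_d G QS)
      (restrict_reach (quotient (det (quotient G R)) Rob) {C. \<not> (\<exists>Z\<in>C. Z \<subseteq> QS // R)})"
    using ex_bisimilar_desired_observers[OF assms(1,4)] assms(5) by (auto simp: secret_classes)
  obtain T' where F: "bisimilar T' (det G) (quotient (det (quotient G R)) Rb)"
    using ex_bisimilar_observers[OF assms(1,4,6)] by blast
  show ?thesis
    using tpo_paths_eq[OF D F] by (simp add: secret_classes)
qed

end
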